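(* Let $d\ge 2$ and let $G$ be a germ. Then every vector $p\in G$ has at most $\frac{d(d-1)}{2}$ entries equal to zero.
   Context: Fix an integer $d\ge 2$. $\langle\cdot,\cdot\rangle$ denotes the standard inner product on $\mathbb{R}^{d^2}$. The probability simplex is $\Delta=\{p\in\mathbb{R}^{d^2}: p(i)\ge 0\ \forall i,\ \sum_i p(i)=1\}$. A subset $A\subseteq\Delta$ is a germ if $\frac{1}{d(d+1)}\le\langle p,s\rangle\le\frac{2}{d(d+1)}$ for all $p,s\in A$ (including $p=s$). *)

theory Defs
  imports "HOL-Analysis.Analysis"
begin

text \<open>Vectors in R^(d^2) are represented as functions nat => real, with
coordinates indexed by {..<d^2}; values outside this index set are irrelevant.\<close>

definition ip :: "nat \<Rightarrow> (nat \<Rightarrow> real) \<Rightarrow> (nat \<Rightarrow> real) \<Rightarrow> real" where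
  "ip d p s = (\<Sum>i<d^2. p i * s i)"

definition prob_simplex :: "nat \<Rightarrow> (nat \<Rightarrow> real) set" where
  "prob_simplex d = {p. (\<forall>i<d^2. p i \<ge> 0) \<and> (\<Sum>i<d^2. p i) = 1}"

definition germ :: "nat \<Rightarrow> (nat \<Rightarrow> real) set \<Rightarrow> bool" where
  "germ d A \<longleftrightarrow> A \<subseteq> prob_simplex d \<and>
     (\<forall>p\<in>A. \<forall>s\<in>A. 1 / (real d * (real d + 1)) \<le> ip d p s \<and>
                      ip d p s \<le> 2 / (real d * (real d + 1)))"

end

theory Submission
  imports Defs
begin

text \<open>By Cauchy--Schwarz, a probability vector with k nonzero entries has squared norm
  at least 1/k. For p in a germ the squared norm is at most 2/(d(d+1)), so p has at
  least d(d+1)/2 nonzero entries out of d^2, leaving at most d(d-1)/2 zeros.\<close>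

lemma sum_squared_le_sum_of_squares_support:
  fixes f :: "'a \<Rightarrow> real"
  assumes "finite A"
  shows "(\<Sum>i\<in>A. f i)\<^sup>2 \<le> (\<Sum>i\<in>A. (f i)\<^sup>2) * card {i\<in>A. f i \<noteq> 0}"
proof -
  have "(\<Sum>i\<in>A. f i) = (\<Sum>i\<in>{i\<in>A. f i \<noteq> 0}. f i)"
    by (rule sum.mono_neutral_right) (auto simp: assms)
  moreover have "(\<Sum>i\<in>A. (f i)\<^sup>2) = (\<Sum>i\<in>{i\<in>A. f i \<noteq> 0}. (f i)\<^sup>2)"
    by (rule sum.mono_neutral_right) (auto simp: assms)
  ultimately show ?thesis
    using sum_squared_le_sum_of_squares by simp
qed

lemma prob_simplex_support_card_ge:
  assumes "p \<in> prob_simplex d"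
  shows "1 \<le> ip d p p * card {i. i < d^2 \<and> p i \<noteq> 0}"
proof -
  have "(\<Sum>i<d^2. p i) = 1"
    using assms by (simp add: prob_simplex_def)
  moreover have "{i\<in>{..<d^2}. p i \<noteq> 0} = {i. i < d^2 \<and> p i \<noteq> 0}"
    by auto
  ultimately show ?thesis
    using sum_squared_le_sum_of_squares_support[of "{..<d^2}" p]
    by (simp add: ip_def power2_eq_square)
qed

lemma card_zeros_add_card_support:
  fixes p :: "nat \<Rightarrow> real"
  shows "card {i. i < n \<and> p i = 0} + card {i. i < n \<and> p i \<noteq> 0} = n"
proof -
  have "{i. i < n \<and> p i = 0} \<union> {i. i < n \<and> p i \<noteq> 0} = {..<n}"
    by auto
  then show ?thesis
    by (subst card_Un_disjoint[symmetric]) auto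
qed

theorem mainTheorem2:
  fixes d :: nat and G :: "(nat \<Rightarrow> real) set" and p :: "nat \<Rightarrow> real"
  assumes "d \<ge> 2" and "germ d G" and "p \<in> G"
  shows "real (card {i. i < d^2 \<and> p i = 0}) \<le> real d * (real d - 1) / 2"
proof -
  define k where "k = real (card {i. i < d^2 \<and> p i \<noteq> 0})"
  have simplex: "p \<in> prob_simplex d"
    and norm_le: "ip d p p \<le> 2 / (real d * (real d + 1))"
    using assms(2,3) unfolding germ_def by auto
  have d_pos: "real d * (real d + 1) > 0"
    using assms(1) by simp
  have "1 \<le> ip d p p * k"
    using prob_simplex_support_card_ge[OF simplex] by (simp add: k_def)
  also have "\<dots> \<le> 2 / (real d * (real d + 1)) * k"
    using norm_le k_def by (intro mult_right_mono) auto
  finally have "real d * (real d + 1) \<le> 2 * k"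
    using d_pos by (simp add: field_simps)
  moreover have "real (card {i. i < d^2 \<and> p i = 0}) + k = real d ^ 2"
    unfolding k_def by (metis card_zeros_add_card_support of_nat_add of_nat_power)
  ultimately show ?thesis
    by (simp add: power2_eq_square algebra_simps)
qed

end
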